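(* Let $1<p<5$. For every $d\in(-1,1)$, let $\mathcal E_0(d)$ be the (open) ellipse in $\mathbb R^2$ centered at $(c(d),0)=\big(-\frac{3d}{4-d^2},0\big)$ with horizontal axis of total length $2a(d)=\frac{4(1-d^2)}{4-d^2}$ and vertical axis of total length $2b(d)=2\sqrt{\frac{1-d^2}{4-d^2}}$. Then $\mathcal E_0(d)\subset B(0,1)$ and \[ \int_{\mathcal E_0(d)}\kappa(de_1,Y)^{p+1}\rho(Y)\,dY=\kappa_0^{p+1}\int_{|y|<\frac12}\rho(y)\,dy . \]
   Context: $\rho(y)=(1-|y|^2)^{\frac{5-p}{2(p-1)}}$; $\kappa_0=\big(\frac{2(p+1)}{(p-1)^2}\big)^{\frac1{p-1}}$; $\kappa(de_1,Y)=\kappa_0\frac{(1-d^2)^{\frac1{p-1}}}{(1+dY_1)^{\frac2{p-1}}}$ for $|Y|<1$, where $e_1=(1,0)$. *)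

theory Defs
  imports "HOL-Analysis.Analysis"
begin

definition rho :: "real \<Rightarrow> real ^ 2 \<Rightarrow> real" where
  "rho p y = (1 - (norm y)\<^sup>2) powr ((5 - p) / (2 * (p - 1)))"

definition kappa0 :: "real \<Rightarrow> real" where
  "kappa0 p = (2 * (p + 1) / (p - 1)\<^sup>2) powr (1 / (p - 1))"

text \<open>kappa(d e_1, Y), for |Y| < 1.\<close>
definition kappa :: "real \<Rightarrow> real \<Rightarrow> real ^ 2 \<Rightarrow> real" where
  "kappa p d Y = kappa0 p * (1 - d\<^sup>2) powr (1 / (p - 1)) / (1 + d * Y$1) powr (2 / (p - 1))"

definition ell_c :: "real \<Rightarrow> real" where "ell_c d = - 3 * d / (4 - d\<^sup>2)"
definition ell_a :: "real \<Rightarrow> real" where "ell_a d = 2 * (1 - d\<^sup>2) / (4 - d\<^sup>2)"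
definition ell_b :: "real \<Rightarrow> real" where "ell_b d = sqrt ((1 - d\<^sup>2) / (4 - d\<^sup>2))"

definition E0 :: "real \<Rightarrow> (real ^ 2) set" where
  "E0 d = {Y. ((Y$1 - ell_c d) / ell_a d)\<^sup>2 + (Y$2 / ell_b d)\<^sup>2 < 1}"

end

theory Submission
  imports Defs
begin

text \<open>The substitution is the Lorentz transform in self-similar variables,
  boost d y = ((y1 - d) / (1 - d y1), sqrt (1 - d^2) y2 / (1 - d y1)).
  It is inverted by boost (-d), preserves the unit ball and maps the disc of radius 1/2 onto E0 d.
  Writing q = (1 - d^2) / (1 - d y1)^2, one has 1 + d (boost d y)1 = (1 - d^2) / (1 - d y1),
  1 - |boost d y|^2 = q (1 - |y|^2) and Jacobian q^(3/2). Hence kappa^(p+1) picks up the factor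
  q^(-(p+1)/(p-1)) and rho the factor q^((5-p)/(2(p-1))), and together with the Jacobian
  the powers of q cancel exactly.\<close>

definition boost :: "real \<Rightarrow> real^2 \<Rightarrow> real^2" where
  "boost d y = ((y$1 - d) / (1 - d * y$1)) *\<^sub>R axis 1 1
     + (sqrt (1 - d\<^sup>2) * y$2 / (1 - d * y$1)) *\<^sub>R axis 2 1"

definition boost_deriv :: "real \<Rightarrow> real^2 \<Rightarrow> real^2 \<Rightarrow> real^2" where
  "boost_deriv d y h = ((1 - d\<^sup>2) / (1 - d * y$1)\<^sup>2 * h$1) *\<^sub>R axis 1 1
     + (sqrt (1 - d\<^sup>2) * d * y$2 / (1 - d * y$1)\<^sup>2 * h$1
        + sqrt (1 - d\<^sup>2) / (1 - d * y$1) * h$2) *\<^sub>R axis 2 1"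

lemma boost_nth [simp]:
  "boost d y $ 1 = (y$1 - d) / (1 - d * y$1)"
  "boost d y $ 2 = sqrt (1 - d\<^sup>2) * y$2 / (1 - d * y$1)"
  by (simp_all add: boost_def axis_def)

lemma norm_power2_vec2: "(norm (y::real^2))\<^sup>2 = (y$1)\<^sup>2 + (y$2)\<^sup>2"
  by (simp add: norm_vec_def L2_set_def UNIV_2)

lemma has_derivative_boost:
  assumes "1 - d * y$1 \<noteq> 0"
  shows "(boost d has_derivative boost_deriv d y) (at y within S)"
proof -
  have vec_nth: "((\<lambda>x::real^2. x $ i) has_derivative (\<lambda>x. x $ i)) F" for i :: 2 and F
    by (rule bounded_linear_imp_has_derivative[OF bounded_linear_vec_nth])
  have quotient_rule: "c * (inverse t * (d * h) * inverse t) = c * d * h / t\<^sup>2"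
    "c * d * h / t\<^sup>2 + h / t = (d * c + t) * h / t\<^sup>2" if "t \<noteq> 0" for c h t :: real
    using that by (simp_all add: field_simps power2_eq_square)
  have numerator: "d * (y$1 - d) + (1 - d * y$1) = 1 - d\<^sup>2"
    by (simp add: algebra_simps power2_eq_square)
  show ?thesis
    unfolding boost_def[abs_def]
    apply (rule has_derivative_eq_rhs)
     apply (intro derivative_eq_intros)
                      apply (rule vec_nth refl assms)+
    apply (rule ext)
    apply (simp add: vec_eq_iff forall_2 axis_def boost_deriv_def del: minus_diff_eq)
    apply (simp only: quotient_rule[OF assms] numerator)
    apply (simp add: mult_ac)
    done
qed

lemma det_boost_deriv:
  assumes d: "\<bar>d\<bar> < 1" and t: "1 - d * y$1 > 0"
  shows "det (matrix (boost_deriv d y)) = ((1 - d\<^sup>2) / (1 - d * y$1)\<^sup>2) powr (3/2)"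
proof -
  let ?q = "(1 - d\<^sup>2) / (1 - d * y$1)\<^sup>2"
  have "0 \<le> 1 - d\<^sup>2" using d by (simp add: abs_square_le_1 less_imp_le)
  then have "sqrt ?q = sqrt (1 - d\<^sup>2) / (1 - d * y$1)"
    using t by (simp add: real_sqrt_divide)
  moreover have "?q powr (3/2) = ?q * sqrt ?q"
    using powr_add[of ?q 1 "1/2"] \<open>0 \<le> 1 - d\<^sup>2\<close> by (simp add: powr_half_sqrt)
  ultimately show ?thesis
    using t by (simp add: det_2 matrix_def boost_deriv_def axis_def)
qed

lemma one_plus_boost:
  assumes "1 - d * y$1 \<noteq> 0"
  shows "1 + d * boost d y $ 1 = (1 - d\<^sup>2) / (1 - d * y$1)"
  using assms by (simp add: field_simps power2_eq_square)

lemma boost_inverse: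
  assumes d: "\<bar>d\<bar> < 1" and t: "1 - d * y$1 \<noteq> 0"
  shows "boost (-d) (boost d y) = y"
proof -
  let ?Y = "boost d y" and ?t = "1 - d * y$1"
  have s: "0 < 1 - d\<^sup>2" using d by (simp add: abs_square_less_1)
  have u: "1 + d * ?Y $ 1 = (1 - d\<^sup>2) / ?t" by (rule one_plus_boost[OF t])
  have v: "?Y $ 1 + d = (1 - d\<^sup>2) * y$1 / ?t"
    using t by (simp add: field_simps power2_eq_square)
  have "boost (-d) ?Y $ 1 = ((1 - d\<^sup>2) * y$1 / ?t) / ((1 - d\<^sup>2) / ?t)"
    by (simp flip: u v)
  also have "\<dots> = y$1" using s t by simp
  moreover have "boost (-d) ?Y $ 2 = sqrt (1 - d\<^sup>2) * (sqrt (1 - d\<^sup>2) * y$2 / ?t) / ((1 - d\<^sup>2) / ?t)"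
    by (simp flip: u)
  moreover have "\<dots> = y$2" using s t by (simp add: mult.assoc[symmetric])
  ultimately show ?thesis
    unfolding vec_eq_iff forall_2 by simp
qed

lemma one_minus_mult_nth_pos:
  assumes "\<bar>d\<bar> < 1" and "norm (y::real^2) < 1"
  shows "0 < 1 - d * y$1"
proof -
  have "\<bar>y$1\<bar> < 1" using component_le_norm_cart[of y 1] assms(2) by linarith
  then have "\<bar>d\<bar> * \<bar>y$1\<bar> < 1 * 1" using assms(1) by (intro mult_strict_mono) auto
  then have "\<bar>d * y$1\<bar> < 1" by (simp add: abs_mult)
  then show ?thesis by linarith
qed

lemma one_minus_norm_boost:
  assumes "\<bar>d\<bar> \<le> 1" and "1 - d * y$1 \<noteq> 0"
  shows "1 - (norm (boost d y))\<^sup>2 = (1 - d\<^sup>2) / (1 - d * y$1)\<^sup>2 * (1 - (norm y)\<^sup>2)"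
proof -
  have "(sqrt (1 - d\<^sup>2) * y$2 / (1 - d * y$1))\<^sup>2 = (1 - d\<^sup>2) * (y$2)\<^sup>2 / (1 - d * y$1)\<^sup>2"
    using assms(1) by (simp add: power_divide power_mult_distrib abs_square_le_1)
  then show ?thesis
    using assms(2) unfolding norm_power2_vec2 boost_nth
    by (simp add: field_simps) (simp add: algebra_simps power2_eq_square)
qed

lemma norm_boost_less_one:
  assumes "\<bar>d\<bar> < 1" and "norm y < 1"
  shows "norm (boost d y) < 1"
proof -
  have "0 < 1 - d * y$1" by (rule one_minus_mult_nth_pos[OF assms])
  moreover have "0 < 1 - d\<^sup>2" "0 < 1 - (norm y)\<^sup>2"
    using assms by (simp_all add: abs_square_less_1 power_less_one_iff)
  ultimately have "0 < 1 - (norm (boost d y))\<^sup>2"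
    using one_minus_norm_boost[of d y] assms(1) by simp
  then show ?thesis by (simp add: power_less_one_iff)
qed

lemma E0_form_boost:
  assumes d: "\<bar>d\<bar> < 1" and t: "1 - d * y$1 \<noteq> 0"
  shows "((boost d y $ 1 - ell_c d) / ell_a d)\<^sup>2 + (boost d y $ 2 / ell_b d)\<^sup>2
    = 1 + (4 - d\<^sup>2) * ((norm y)\<^sup>2 - 1/4) / (1 - d * y$1)\<^sup>2"
proof -
  let ?t = "1 - d * y$1"
  have s: "0 < 1 - d\<^sup>2" using d by (simp add: abs_square_less_1)
  then have q: "0 < 4 - d\<^sup>2" by linarith
  have cancel: "a * z / (t * b) / (2 * a / b) = z / (2 * t)" if "a \<noteq> 0" "b \<noteq> 0"
    for a b z t :: real
    using that by (simp add: field_simps)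
  have "boost d y $ 1 - ell_c d = (y$1 - d) / ?t + 3 * d / (4 - d\<^sup>2)"
    by (simp add: ell_c_def)
  also have "\<dots> = ((y$1 - d) * (4 - d\<^sup>2) + 3 * d * ?t) / (?t * (4 - d\<^sup>2))"
    using q t by (simp add: add_frac_eq)
  also have "(y$1 - d) * (4 - d\<^sup>2) + 3 * d * ?t = (1 - d\<^sup>2) * (4 * y$1 - d)"
    by (simp add: algebra_simps power2_eq_square)
  finally have "(boost d y $ 1 - ell_c d) / ell_a d
      = (1 - d\<^sup>2) * (4 * y$1 - d) / (?t * (4 - d\<^sup>2)) / (2 * (1 - d\<^sup>2) / (4 - d\<^sup>2))"
    by (simp only: ell_a_def)
  also have "\<dots> = (4 * y$1 - d) / (2 * ?t)"
    by (rule cancel) (use s q in auto)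
  moreover have "(boost d y $ 2 / ell_b d)\<^sup>2 = (4 - d\<^sup>2) * (y$2)\<^sup>2 / ?t\<^sup>2"
    using s q by (simp add: ell_b_def power_divide power_mult_distrib real_sqrt_divide)
  moreover have "((4 * y$1 - d) / (2 * ?t))\<^sup>2 + (4 - d\<^sup>2) * (y$2)\<^sup>2 / ?t\<^sup>2
      = ((4 * y$1 - d)\<^sup>2 / 4 + (4 - d\<^sup>2) * (y$2)\<^sup>2) / ?t\<^sup>2"
    by (simp add: power_divide power_mult_distrib add_divide_distrib)
      (simp add: power2_eq_square algebra_simps)
  moreover have "(4 * y$1 - d)\<^sup>2 / 4 + (4 - d\<^sup>2) * (y$2)\<^sup>2
      = ?t\<^sup>2 + (4 - d\<^sup>2) * ((y$1)\<^sup>2 + (y$2)\<^sup>2 - 1/4)"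
    by (simp add: field_simps power2_eq_square)
  ultimately show ?thesis
    using t by (simp add: norm_power2_vec2 add_divide_distrib)
qed

lemma boost_mem_E0_iff:
  assumes d: "\<bar>d\<bar> < 1" and t: "1 - d * y$1 \<noteq> 0"
  shows "boost d y \<in> E0 d \<longleftrightarrow> norm y < 1/2"
proof -
  have "0 < 1 - d\<^sup>2" using d by (simp add: abs_square_less_1)
  then have "0 < 4 - d\<^sup>2" by linarith
  then have "boost d y \<in> E0 d \<longleftrightarrow> (2 * norm y)\<^sup>2 < 1"
    using t unfolding E0_def mem_Collect_eq E0_form_boost[OF d t]
    by (simp add: divide_less_0_iff mult_less_0_iff power_mult_distrib mult.commute)
  then show ?thesis
    using abs_square_less_1[of "2 * norm y"] by (simp add: power_mult_distrib mult.commute)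
qed

lemma E0_one_plus_mult_nth_pos:
  assumes d: "\<bar>d\<bar> < 1" and Y: "Y \<in> E0 d"
  shows "0 < 1 + d * Y$1"
proof -
  have s: "0 < 1 - d\<^sup>2" using d by (simp add: abs_square_less_1)
  then have q: "0 < 4 - d\<^sup>2" by linarith
  have a: "0 < ell_a d" using s q by (simp add: ell_a_def)
  have "((Y$1 - ell_c d) / ell_a d)\<^sup>2 + (Y$2 / ell_b d)\<^sup>2 < 1"
    using Y by (simp add: E0_def)
  then have "((Y$1 - ell_c d) / ell_a d)\<^sup>2 < 1"
    by (rule le_less_trans[rotated]) simp
  then have "\<bar>(Y$1 - ell_c d) / ell_a d\<bar> < 1"
    by (simp only: abs_square_less_1)
  then have "\<bar>Y$1 - ell_c d\<bar> < ell_a d"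
    using a by (metis abs_div_pos divide_less_eq_1_pos)
  then have "\<bar>d * (Y$1 - ell_c d)\<bar> \<le> \<bar>d\<bar> * ell_a d"
    unfolding abs_mult by (intro mult_left_mono) auto
  moreover have "0 < 1 + d * ell_c d - \<bar>d\<bar> * ell_a d"
  proof -
    have qc: "(4 - d\<^sup>2) * ell_c d = - 3 * d" and qa: "(4 - d\<^sup>2) * ell_a d = 2 * (1 - d\<^sup>2)"
      using q by (simp_all add: ell_c_def ell_a_def)
    have "(4 - d\<^sup>2) * (1 + d * ell_c d - \<bar>d\<bar> * ell_a d)
        = (4 - d\<^sup>2) + d * ((4 - d\<^sup>2) * ell_c d) - \<bar>d\<bar> * ((4 - d\<^sup>2) * ell_a d)"
      by (simp add: algebra_simps)
    also have "\<dots> = (1 - d\<^sup>2) * (4 - 2 * \<bar>d\<bar>)"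
      unfolding qc qa by (simp add: algebra_simps power2_eq_square)
    finally have "(4 - d\<^sup>2) * (1 + d * ell_c d - \<bar>d\<bar> * ell_a d) = (1 - d\<^sup>2) * (4 - 2 * \<bar>d\<bar>)" .
    moreover have "0 < (1 - d\<^sup>2) * (4 - 2 * \<bar>d\<bar>)" using s d by (intro mult_pos_pos) auto
    ultimately show ?thesis using q by (metis zero_less_mult_pos)
  qed
  moreover have "d * Y$1 = d * ell_c d + d * (Y$1 - ell_c d)"
    by (simp add: algebra_simps)
  ultimately show ?thesis
    using abs_ge_minus_self[of "d * (Y$1 - ell_c d)"] by linarith
qed

lemma boost_image_ball:
  assumes d: "\<bar>d\<bar> < 1"
  shows "boost d ` ball 0 (1/2) = E0 d"
proof
  show "boost d ` ball 0 (1/2) \<subseteq> E0 d"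
  proof
    fix Y assume "Y \<in> boost d ` ball 0 (1/2)"
    then obtain y where y: "norm y < 1/2" "Y = boost d y" by auto
    have "0 < 1 - d * y$1" using one_minus_mult_nth_pos[OF d] y(1) by simp
    then show "Y \<in> E0 d" using boost_mem_E0_iff[OF d] y by simp
  qed
  show "E0 d \<subseteq> boost d ` ball 0 (1/2)"
  proof
    fix Y assume Y: "Y \<in> E0 d"
    have s: "0 < 1 - d\<^sup>2" using d by (simp add: abs_square_less_1)
    define y where "y = boost (-d) Y"
    have u: "1 - (-d) * Y$1 \<noteq> 0" using E0_one_plus_mult_nth_pos[OF d Y] by simp
    have "1 - d * y$1 = (1 - d\<^sup>2) / (1 + d * Y$1)"
      using one_plus_boost[OF u] by (simp add: y_def)
    then have t: "1 - d * y$1 \<noteq> 0"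
      using u s by simp
    have "boost d y = Y" using boost_inverse[of "-d", OF _ u] d by (simp add: y_def)
    then have "norm y < 1/2" using boost_mem_E0_iff[OF d t] Y by simp
    then show "Y \<in> boost d ` ball 0 (1/2)" using \<open>boost d y = Y\<close> by force
  qed
qed

lemma E0_subset_ball:
  assumes d: "\<bar>d\<bar> < 1"
  shows "E0 d \<subseteq> ball 0 1"
proof
  fix Y assume "Y \<in> E0 d"
  then have "Y \<in> boost d ` ball 0 (1/2)" by (simp add: boost_image_ball[OF d])
  then obtain y where "norm y < 1/2" "Y = boost d y" by auto
  then show "Y \<in> ball 0 1" using norm_boost_less_one[OF d, of y] by simp
qed

lemma kappa_eq_powr:
  assumes "d\<^sup>2 \<le> 1" and "0 < 1 + d * Y$1"
  shows "kappa p d Y = kappa0 p * ((1 - d\<^sup>2) / (1 + d * Y$1)\<^sup>2) powr (1 / (p - 1))"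
proof -
  have "((1 + d * Y$1)\<^sup>2) powr (1 / (p - 1)) = (1 + d * Y$1) powr (2 / (p - 1))"
    using assms(2) powr_powr[of "1 + d * Y$1" 2 "1 / (p - 1)"] by simp
  then show ?thesis
    using assms by (simp add: kappa_def powr_divide)
qed

lemma kappa_rho_boost_times_jacobian:
  assumes p: "1 < p" and d: "\<bar>d\<bar> < 1" and y: "norm y < 1"
  shows "\<bar>det (matrix (boost_deriv d y))\<bar> * (kappa p d (boost d y) powr (p + 1) * rho p (boost d y))
    = kappa0 p powr (p + 1) * rho p y"
proof -
  define q where "q = (1 - d\<^sup>2) / (1 - d * y$1)\<^sup>2"
  have t: "0 < 1 - d * y$1" by (rule one_minus_mult_nth_pos[OF d y])
  have s: "0 < 1 - d\<^sup>2" using d by (simp add: abs_square_less_1)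
  have q: "0 < q" using s t by (simp add: q_def)
  have r: "0 \<le> 1 - (norm y)\<^sup>2" using y by (simp add: power_le_one)
  have u: "1 + d * boost d y $ 1 = (1 - d\<^sup>2) / (1 - d * y$1)"
    using t by (intro one_plus_boost) simp
  have "a / (a / b)\<^sup>2 = 1 / (a / b\<^sup>2)" if "a \<noteq> 0" for a b :: real
    using that by (simp add: power2_eq_square)
  then have "(1 - d\<^sup>2) / (1 + d * boost d y $ 1)\<^sup>2 = 1 / q"
    unfolding u q_def using s by simp
  moreover have "0 < 1 + d * boost d y $ 1" using u s t by simp
  ultimately have "kappa p d (boost d y) = kappa0 p * (1 / q) powr (1 / (p - 1))"
    using s by (simp add: kappa_eq_powr)
  then have kappa: "kappa p d (boost d y) powr (p + 1) = kappa0 p powr (p + 1) * q powr (- ((p + 1) / (p - 1)))"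
    using q by (simp add: powr_mult powr_powr powr_divide powr_minus_divide)
  have rho: "rho p (boost d y) = q powr ((5 - p) / (2 * (p - 1))) * rho p y"
  proof -
    have "1 - (norm (boost d y))\<^sup>2 = q * (1 - (norm y)\<^sup>2)"
      unfolding q_def using d t by (intro one_minus_norm_boost) auto
    then show ?thesis
      unfolding rho_def using q r by (simp add: powr_mult)
  qed
  have det: "\<bar>det (matrix (boost_deriv d y))\<bar> = q powr (3/2)"
    using det_boost_deriv[OF d t] by (simp add: q_def)
  have exponent: "3/2 + - ((p + 1) / (p - 1)) + (5 - p) / (2 * (p - 1)) = 0"
    using p by (simp add: field_simps)
  have "q powr (3/2) * (kappa0 p powr (p + 1) * q powr (- ((p + 1) / (p - 1)))
        * (q powr ((5 - p) / (2 * (p - 1))) * rho p y))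
      = kappa0 p powr (p + 1) * rho p y
        * q powr (3/2 + - ((p + 1) / (p - 1)) + (5 - p) / (2 * (p - 1)))"
    by (simp only: powr_add mult_ac)
  also have "\<dots> = kappa0 p powr (p + 1) * rho p y"
    using q by (simp only: exponent powr_zero_eq_one) simp
  finally show ?thesis
    unfolding det kappa rho .
qed

lemma borel_measurable_rho [measurable]: "rho p \<in> borel_measurable borel"
  unfolding rho_def by measurable

lemma set_integrable_rho:
  assumes p: "1 < p" "p \<le> 5" and S: "S \<in> sets lborel" "S \<subseteq> ball 0 1"
  shows "set_integrable lborel S (rho p)"
  unfolding set_integrable_def
proof (rule integrableI_bounded_set_indicator[where B=1])
  show "rho p \<in> borel_measurable lborel" by simp
  have "emeasure lborel S \<le> emeasure lborel (ball (0::real^2) 1)"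
    using S(2) by (intro emeasure_mono) auto
  then show "emeasure lborel S < \<infinity>"
    using emeasure_lborel_ball_finite by (rule le_less_trans)
  show "AE x in lborel. x \<in> S \<longrightarrow> norm (rho p x) \<le> 1"
  proof (rule AE_I2, rule impI)
    fix x assume "x \<in> S"
    then have "norm x < 1" using S(2) by auto
    then have "\<bar>1 - (norm x)\<^sup>2\<bar> \<le> 1" by (simp add: power_le_one abs_le_iff)
    moreover have "0 \<le> (5 - p) / (2 * (p - 1))" using p by simp
    ultimately show "norm (rho p x) \<le> 1" by (simp add: rho_def powr_le1)
  qed
qed (use S in simp)

lemma set_integrable_lborel_iff_absolutely_integrable_on:
  fixes f :: "'a::euclidean_space \<Rightarrow> 'b::euclidean_space"
  assumes "S \<in> sets borel" and "f \<in> borel_measurable borel"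
  shows "set_integrable lborel S f \<longleftrightarrow> f absolutely_integrable_on S"
  unfolding set_integrable_def using assms by (simp add: integrable_completion)

lemma has_absolute_integral_change_of_variables_real_valued:
  fixes f :: "real^'n::{finite,wellorder} \<Rightarrow> real" and g :: "real^'n::_ \<Rightarrow> real^'n::_"
  assumes "S \<in> sets lebesgue"
    and "\<And>x. x \<in> S \<Longrightarrow> (g has_derivative g' x) (at x within S)"
    and "inj_on g S"
  shows "(\<lambda>x. \<bar>det (matrix (g' x))\<bar> * f (g x)) absolutely_integrable_on S \<and>
      integral S (\<lambda>x. \<bar>det (matrix (g' x))\<bar> * f (g x)) = b
    \<longleftrightarrow> f absolutely_integrable_on (g ` S) \<and> integral (g ` S) f = b"
  using has_absolute_integral_change_of_variables[OF assms, of "\<lambda>x. vec (f x) :: real^1" "vec b"]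
  by (simp add: absolutely_integrable_on_1_iff integral_on_1_eq)

lemma inj_on_boost_ball:
  assumes "\<bar>d\<bar> < 1"
  shows "inj_on (boost d) (ball 0 1)"
proof (rule inj_on_inverseI)
  show "boost (-d) (boost d y) = y" if "y \<in> ball 0 1" for y
    using one_minus_mult_nth_pos[OF assms, of y] that by (intro boost_inverse[OF assms]) simp
qed

lemma has_absolute_integral_kappa_rho_E0:
  assumes p: "1 < p" "p \<le> 5" and d: "\<bar>d\<bar> < 1"
  defines "F \<equiv> \<lambda>Y. kappa p d Y powr (p + 1) * rho p Y"
  shows "F absolutely_integrable_on E0 d \<and>
    integral (E0 d) F = kappa0 p powr (p + 1) * integral (ball 0 (1/2)) (rho p)"
  unfolding boost_image_ball[OF d, symmetric]
proof (rule has_absolute_integral_change_of_variables_real_valued[THEN iffD1])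
  let ?B = "ball (0::real^2) (1/2)" and ?K = "kappa0 p powr (p + 1)"
  have t: "0 < 1 - d * y$1" if "y \<in> ?B" for y
    using that one_minus_mult_nth_pos[OF d, of y] by simp
  show "(boost d has_derivative boost_deriv d y) (at y within ?B)" if "y \<in> ?B" for y
    using t[OF that] by (intro has_derivative_boost) simp
  show "inj_on (boost d) ?B"
    using inj_on_boost_ball[OF d] by (rule inj_on_subset) auto
  have weight: "\<bar>det (matrix (boost_deriv d y))\<bar> * F (boost d y) = ?K * rho p y" if "y \<in> ?B" for y
    using kappa_rho_boost_times_jacobian[OF p(1) d] that by (simp add: F_def)
  have "set_integrable lborel ?B (rho p)"
    using p by (intro set_integrable_rho) auto
  then have "rho p absolutely_integrable_on ?B"
    by (simp add: set_integrable_lborel_iff_absolutely_integrable_on)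
  then have "(\<lambda>y. \<bar>det (matrix (boost_deriv d y))\<bar> * F (boost d y)) absolutely_integrable_on ?B"
    using weight by (subst set_integrable_cong[OF refl refl weight]) auto
  moreover have "integral ?B (\<lambda>y. \<bar>det (matrix (boost_deriv d y))\<bar> * F (boost d y))
      = ?K * integral ?B (rho p)"
    by (subst integral_cong[OF weight]) simp_all
  ultimately show "(\<lambda>y. \<bar>det (matrix (boost_deriv d y))\<bar> * F (boost d y)) absolutely_integrable_on ?B \<and>
      integral ?B (\<lambda>y. \<bar>det (matrix (boost_deriv d y))\<bar> * F (boost d y)) = ?K * integral ?B (rho p)"
    by blast
qed simp

theorem lemmaB4:
  fixes p d :: real
  assumes "1 < p" "p < 5" "-1 < d" "d < 1"
  shows "E0 d \<subseteq> ball 0 1 \<and>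
    (\<integral>Y\<in>E0 d. kappa p d Y powr (p + 1) * rho p Y \<partial>lborel)
      = kappa0 p powr (p + 1) * (\<integral>y\<in>ball 0 (1/2). rho p y \<partial>lborel)"
proof -
  have d: "\<bar>d\<bar> < 1" using assms(3,4) by simp
  let ?F = "\<lambda>Y. kappa p d Y powr (p + 1) * rho p Y"
  have cov: "?F absolutely_integrable_on E0 d"
    "integral (E0 d) ?F = kappa0 p powr (p + 1) * integral (ball 0 (1/2)) (rho p)"
    using has_absolute_integral_kappa_rho_E0[OF assms(1) _ d] assms(2) by auto
  have "E0 d \<in> sets borel" "?F \<in> borel_measurable borel"
    unfolding E0_def kappa_def by measurable
  then have "set_integrable lborel (E0 d) ?F"
    using cov(1) by (simp add: set_integrable_lborel_iff_absolutely_integrable_on)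
  moreover have "set_integrable lborel (ball 0 (1/2)) (rho p)"
    using assms(1,2) by (intro set_integrable_rho) auto
  ultimately show ?thesis
    using E0_subset_ball[OF d] cov(2) by (simp add: set_borel_integral_eq_integral(2))
qed

end
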